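(* Let $(G,u)$ be a unital $\ell$-group and $M=\Gamma(G,u)$, and suppose every non-zero element of $M$ is a strong unit of $G$. Then $M$ is an MV-algebra, and for every unital Riesz space $(R,1_R)$ the set of $(R,1_R)$-states on $M$ is non-empty, every $(R,1_R)$-state $s$ on $M$ is an $(R,1_R)$-state-morphism, and $\mathrm{Ker}(s)$ is a maximal ideal of $M$. If moreover $(R,1_R)$ is Archimedean, then $M$ has exactly one $(R,1_R)$-state.
   Context: For a unital $\ell$-group $(G,u)$ ($\ell$-group, not necessarily abelian, with strong unit $u$), $\Gamma(G,u)=[0,u]$ with $x\oplus y=(x+y)\wedge u$, $x^-=u-x$, $x^\sim=-x+u$, $x\odot y=(x-u+y)\vee0$ is a pseudo MV-algebra; it is an MV-algebra iff $\oplus$ is commutative. Partial addition: $x+y$ defined iff $x\odot y=0$, then $x+y=x\oplus y$. Ideal: nonempty down-set closed under $\oplus$; maximal = maximal among proper ideals. A unital Riesz space $(R,1_R)$ is a Riesz space with fixed strong unit; Archimedean if $na\le b$ for all $n$ implies $a\le0$. $\Gamma(R,1_R)$ is the MV-algebra on $[0,1_R]$. An $(R,1_R)$-state on $M$ is a map $s:M\to[0,1_R]$ with $s(1)=1_R$, $s(x+y)=s(x)+s(y)$ whenever $x+y$ defined; an $(R,1_R)$-state-morphism is a homomorphism $M\to\Gamma(R,1_R)$. $\mathrm{Ker}(s)=\{x:s(x)=0\}$. *)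

theory Defs
  imports Complex_Main
begin

fun nmul :: "nat \<Rightarrow> 'a::monoid_add \<Rightarrow> 'a" where
  "nmul 0 x = 0"
| "nmul (Suc n) x = x + nmul n x"

definition lgroup :: "'g::{group_add,lattice} itself \<Rightarrow> bool" where
  "lgroup _ \<longleftrightarrow> (\<forall>a b c :: 'g. a \<le> b \<longrightarrow> c + a \<le> c + b \<and> a + c \<le> b + c)"

definition strong_unit :: "'g::{group_add,lattice} \<Rightarrow> bool" where
  "strong_unit u \<longleftrightarrow> 0 < u \<and> (\<forall>g. \<exists>n. g \<le> nmul n u)"

definition unital_lgroup :: "'g::{group_add,lattice} \<Rightarrow> bool" where
  "unital_lgroup u \<longleftrightarrow> lgroup TYPE('g) \<and> strong_unit u"

definition Gam :: "'g::{group_add,lattice} \<Rightarrow> 'g set" where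
  "Gam u = {x. 0 \<le> x \<and> x \<le> u}"

definition gam_oplus :: "'g::{group_add,lattice} \<Rightarrow> 'g \<Rightarrow> 'g \<Rightarrow> 'g" where
  "gam_oplus u x y = inf (x + y) u"

definition gam_negl :: "'g::{group_add,lattice} \<Rightarrow> 'g \<Rightarrow> 'g" where
  "gam_negl u x = u - x"

definition gam_negr :: "'g::{group_add,lattice} \<Rightarrow> 'g \<Rightarrow> 'g" where
  "gam_negr u x = - x + u"

definition gam_odot :: "'g::{group_add,lattice} \<Rightarrow> 'g \<Rightarrow> 'g \<Rightarrow> 'g" where
  "gam_odot u x y = sup (x - u + y) 0"

text \<open>Gamma(G,u) is an MV-algebra iff oplus is commutative\<close>
definition gam_is_MV :: "'g::{group_add,lattice} \<Rightarrow> bool" where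
  "gam_is_MV u \<longleftrightarrow> (\<forall>x\<in>Gam u. \<forall>y\<in>Gam u. gam_oplus u x y = gam_oplus u y x)"

definition gam_ideal :: "'g::{group_add,lattice} \<Rightarrow> 'g set \<Rightarrow> bool" where
  "gam_ideal u I \<longleftrightarrow> I \<subseteq> Gam u \<and> I \<noteq> {} \<and>
     (\<forall>x\<in>I. \<forall>y\<in>Gam u. y \<le> x \<longrightarrow> y \<in> I) \<and>
     (\<forall>x\<in>I. \<forall>y\<in>I. gam_oplus u x y \<in> I)"

definition gam_maximal_ideal :: "'g::{group_add,lattice} \<Rightarrow> 'g set \<Rightarrow> bool" where
  "gam_maximal_ideal u I \<longleftrightarrow> gam_ideal u I \<and> I \<noteq> Gam u \<and>
     (\<forall>J. gam_ideal u J \<and> J \<noteq> Gam u \<and> I \<subseteq> J \<longrightarrow> J = I)"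

definition riesz_unit :: "'r::{ordered_real_vector,lattice} \<Rightarrow> bool" where
  "riesz_unit e \<longleftrightarrow> 0 < e \<and> (\<forall>a. \<exists>n::nat. a \<le> real n *\<^sub>R e)"

definition riesz_archimedean :: "'r::{ordered_real_vector,lattice} itself \<Rightarrow> bool" where
  "riesz_archimedean _ \<longleftrightarrow> (\<forall>a b :: 'r. (\<forall>n::nat. real n *\<^sub>R a \<le> b) \<longrightarrow> a \<le> 0)"

text \<open>(R,1_R)-state on Gamma(G,u): partial addition x+y is defined iff x odot y = 0,
  and then equals x oplus y\<close>
definition R_state :: "'g::{group_add,lattice} \<Rightarrow> 'r::{ordered_real_vector,lattice}
    \<Rightarrow> ('g \<Rightarrow> 'r) \<Rightarrow> bool" where
  "R_state u e s \<longleftrightarrow> (\<forall>x\<in>Gam u. s x \<in> Gam e) \<and> s u = e \<and>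
     (\<forall>x\<in>Gam u. \<forall>y\<in>Gam u. gam_odot u x y = 0 \<longrightarrow> s (gam_oplus u x y) = s x + s y)"

definition R_state_morphism :: "'g::{group_add,lattice} \<Rightarrow> 'r::{ordered_real_vector,lattice}
    \<Rightarrow> ('g \<Rightarrow> 'r) \<Rightarrow> bool" where
  "R_state_morphism u e s \<longleftrightarrow> (\<forall>x\<in>Gam u. s x \<in> Gam e) \<and> s 0 = 0 \<and>
     (\<forall>x\<in>Gam u. \<forall>y\<in>Gam u. s (gam_oplus u x y) = gam_oplus e (s x) (s y)) \<and>
     (\<forall>x\<in>Gam u. s (gam_negl u x) = gam_negl e (s x)) \<and>
     (\<forall>x\<in>Gam u. s (gam_negr u x) = gam_negr e (s x))"

definition state_ker :: "'g::{group_add,lattice} \<Rightarrow> ('g \<Rightarrow> 'r::zero) \<Rightarrow> 'g set" where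
  "state_ker u s = {x\<in>Gam u. s x = 0}"

end

theory Submission
  imports Defs
begin

text \<open>If every non-zero element of [0,u] is a strong unit, two disjoint positive elements
  p, q cannot both be non-zero (q would lie below a multiple of the non-zero element inf p u
  of [0,u] while being disjoint from it), so G is a chain, and it is archimedean. By Hoelder's theorem G is then abelian,
  which makes Gamma(G,u) an MV-algebra. A state s is pinned down by the values n s(x),
  which lie between q e and (q+1) e where q u <= n x < (q+1) u; this gives uniqueness over
  an archimedean Riesz space, while Hoelder's ratio x \<mapsto> sup {q/n | q u <= n x} provides a
  state. Since G is a chain, every state preserves the truncated sum, and its kernel is {0},
  a maximal ideal, because the iterated truncated sums of any non-zero x reach u.\<close>

lemma nmul_add: "nmul (m + n) x = nmul m x + nmul n (x::'a::monoid_add)"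
  by (induct m) (simp_all add: add.assoc)

lemma nmul_mult: "nmul (m * n) x = nmul m (nmul n (x::'a::monoid_add))"
  by (induct m) (simp_all add: nmul_add)

lemma nmul_commute: "nmul m x + nmul n x = nmul n x + nmul m (x::'a::monoid_add)"
  by (metis nmul_add add.commute)

lemma nmul_Suc_right: "nmul (Suc n) x = nmul n x + (x::'a::monoid_add)"
  using nmul_add[of n 1 x] by simp

lemma real_eq_0_if_nat_mult_abs_bounded:
  fixes a c :: real
  assumes "\<And>n::nat. 0 < n \<Longrightarrow> real n * \<bar>a\<bar> \<le> c"
  shows "a = 0"
proof (rule ccontr)
  assume "a \<noteq> 0"
  then obtain n :: nat where "c < real n * \<bar>a\<bar>"
    using reals_Archimedean3[of "\<bar>a\<bar>"] by auto
  also have "\<dots> \<le> real (Suc n) * \<bar>a\<bar>" by (simp add: mult_right_mono)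
  also have "\<dots> \<le> c" using assms by blast
  finally show False by simp
qed

text \<open>Being an l-group is a property of the type; the dummy parameter T carries it into the
  locale.\<close>
locale lattice_ordered_group =
  fixes T :: "'g::{group_add,lattice} itself"
  assumes lgroup: "lgroup T"
begin

lemma lg_add_left_mono: "a \<le> b \<Longrightarrow> c + a \<le> c + (b::'g)"
  using lgroup unfolding lgroup_def by blast

lemma lg_add_right_mono: "a \<le> b \<Longrightarrow> a + c \<le> b + (c::'g)"
  using lgroup unfolding lgroup_def by blast

lemma lg_add_mono: "a \<le> b \<Longrightarrow> c \<le> d \<Longrightarrow> a + c \<le> b + (d::'g)"
  by (meson order_trans lg_add_left_mono lg_add_right_mono)

lemma lg_add_le_cancel_left [simp]: "c + a \<le> c + b \<longleftrightarrow> a \<le> (b::'g)"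
  using lg_add_left_mono[of "c + a" "c + b" "-c"] lg_add_left_mono
  by (auto simp: add.assoc[symmetric])

lemma lg_add_le_cancel_right [simp]: "a + c \<le> b + c \<longleftrightarrow> a \<le> (b::'g)"
  using lg_add_right_mono[of "a + c" "b + c" "-c"] lg_add_right_mono
  by (auto simp: add.assoc)

lemma lg_add_strict_left_mono: "a < b \<Longrightarrow> c + a < c + (b::'g)"
  by (simp add: less_le)

lemma lg_add_strict_right_mono: "a < b \<Longrightarrow> a + c < b + (c::'g)"
  by (simp add: less_le)

lemma lg_add_less_le_mono: "a < b \<Longrightarrow> c \<le> d \<Longrightarrow> a + c < b + (d::'g)"
  by (meson less_le_trans lg_add_left_mono lg_add_strict_right_mono)

lemma lg_add_le_less_mono: "a \<le> b \<Longrightarrow> c < d \<Longrightarrow> a + c < b + (d::'g)"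
  by (meson le_less_trans lg_add_strict_left_mono lg_add_right_mono)

lemma lg_minus_le_minus: "a \<le> b \<Longrightarrow> -b \<le> -(a::'g)"
proof -
  assume "a \<le> b"
  then have "-b + a + -a \<le> -b + b + -a" using lg_add_left_mono lg_add_right_mono by blast
  then show ?thesis by (simp add: add.assoc)
qed

lemma inf_add_distrib_left: "c + inf a b = inf (c + a) (c + (b::'g))"
proof (rule antisym)
  show "c + inf a b \<le> inf (c + a) (c + b)" by (simp add: lg_add_left_mono)
  have "-c + inf (c + a) (c + b) \<le> inf a b"
    using lg_add_left_mono[of "inf (c + a) (c + b)" "c + a" "-c"]
      lg_add_left_mono[of "inf (c + a) (c + b)" "c + b" "-c"]
    by (simp add: add.assoc[symmetric])
  then have "c + (-c + inf (c + a) (c + b)) \<le> c + inf a b" by (rule lg_add_left_mono)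
  then show "inf (c + a) (c + b) \<le> c + inf a b" by (simp add: add.assoc[symmetric])
qed

lemma inf_add_distrib_right: "inf a b + c = inf (a + c) (b + (c::'g))"
proof (rule antisym)
  show "inf a b + c \<le> inf (a + c) (b + c)" by (simp add: lg_add_right_mono)
  have "inf (a + c) (b + c) + -c \<le> inf a b"
    using lg_add_right_mono[of "inf (a + c) (b + c)" "a + c" "-c"]
      lg_add_right_mono[of "inf (a + c) (b + c)" "b + c" "-c"]
    by (simp add: add.assoc)
  then have "inf (a + c) (b + c) + -c + c \<le> inf a b + c" by (rule lg_add_right_mono)
  then show "inf (a + c) (b + c) \<le> inf a b + c" by (simp add: add.assoc)
qed

lemma nmul_nonneg: "0 \<le> x \<Longrightarrow> 0 \<le> nmul n (x::'g)"
  by (induct n) (auto intro: order_trans[OF _ lg_add_mono[of 0 x 0]])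

lemma nmul_mono: "x \<le> y \<Longrightarrow> nmul n x \<le> nmul n (y::'g)"
  by (induct n) (auto intro: lg_add_mono)

lemma nmul_le_nmul: "0 \<le> x \<Longrightarrow> m \<le> n \<Longrightarrow> nmul m x \<le> nmul n (x::'g)"
proof -
  assume x: "0 \<le> x" and "m \<le> n"
  then obtain k where "n = m + k" using le_Suc_ex by blast
  moreover have "nmul m x + 0 \<le> nmul m x + nmul k x" using lg_add_left_mono nmul_nonneg[OF x] by blast
  ultimately show ?thesis by (simp add: nmul_add)
qed

lemma nmul_less_Suc: "0 < x \<Longrightarrow> nmul n x < nmul (Suc n) (x::'g)"
  using lg_add_strict_right_mono[of 0 x "nmul n x"] by simp

lemma nmul_le_nmul_iff: "0 < (x::'g) \<Longrightarrow> nmul m x \<le> nmul n x \<longleftrightarrow> m \<le> n"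
proof
  assume x: "0 < x" and le: "nmul m x \<le> nmul n x"
  show "m \<le> n"
  proof (rule ccontr)
    assume "\<not> m \<le> n"
    then have "nmul (Suc n) x \<le> nmul m x" using nmul_le_nmul[of x "Suc n" m] x by simp
    then show False using nmul_less_Suc[OF x, of n] le by simp
  qed
qed (simp add: nmul_le_nmul)

lemma nmul_less_nmul_imp_less: "0 < (x::'g) \<Longrightarrow> nmul m x < nmul n x \<Longrightarrow> m < n"
  using nmul_le_nmul_iff[of x n m] by (auto simp: less_le_not_le)

lemma inf_nmul_eq_zero:
  assumes a: "0 \<le> a" and b: "0 \<le> b" and ab: "inf a b = 0"
  shows "inf (nmul n a) (b::'g) = 0"
proof (induct n)
  case 0 show ?case using b by (simp add: inf_absorb1)
next
  case (Suc n)
  have "b \<le> b + nmul n a" using lg_add_left_mono[OF nmul_nonneg[OF a]] by simp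
  then have "inf (a + nmul n a) b \<le> inf (a + nmul n a) (b + nmul n a)" by (simp add: le_infI2)
  also have "\<dots> = nmul n a" by (simp add: inf_add_distrib_right[symmetric] ab)
  finally have "inf (a + nmul n a) b \<le> inf (nmul n a) b" by simp
  moreover have "0 \<le> a + nmul n a" using lg_add_mono[OF a nmul_nonneg[OF a]] by simp
  ultimately show ?case using Suc b by (simp add: antisym)
qed

lemma disjoint_le_nmul_eq_zero:
  "0 \<le> a \<Longrightarrow> 0 \<le> b \<Longrightarrow> inf a b = 0 \<Longrightarrow> b \<le> nmul n a \<Longrightarrow> b = (0::'g)"
  using inf_nmul_eq_zero[of a b n] by (metis inf.absorb_iff2)

lemma chain_if_disjoint_trivial:
  assumes disj: "\<And>p q :: 'g. 0 \<le> p \<Longrightarrow> 0 \<le> q \<Longrightarrow> inf p q = 0 \<Longrightarrow> p = 0 \<or> q = 0"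
  shows "a \<le> b \<or> b \<le> (a::'g)"
proof -
  define m where "m = inf a b"
  have "0 \<le> -m + a" "0 \<le> -m + b"
    using lg_add_left_mono[of m _ "-m"] by (simp_all add: m_def)
  moreover have "inf (-m + a) (-m + b) = 0" by (simp add: inf_add_distrib_left[symmetric] m_def)
  ultimately have "a = m \<or> b = m"
    using disj by (metis add.right_neutral add_minus_cancel)
  then show ?thesis unfolding m_def by (metis inf.cobounded1 inf.cobounded2)
qed

lemma disjoint_trivial_if_Gam_strong_units:
  fixes u :: 'g
  assumes u: "strong_unit u" and units: "\<forall>x\<in>Gam u. x \<noteq> 0 \<longrightarrow> strong_unit x"
    and p: "0 \<le> p" and q: "0 \<le> q" and pq: "inf p q = (0::'g)"
  shows "p = 0 \<or> q = 0"
proof (cases "p = 0")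
  case False
  have u0: "0 \<le> u" using u by (simp add: strong_unit_def less_imp_le)
  have "inf p u \<noteq> 0"
  proof
    assume "inf p u = 0"
    moreover obtain n where "p \<le> nmul n u" using u by (auto simp: strong_unit_def)
    ultimately show False using disjoint_le_nmul_eq_zero[OF u0 p] False by (simp add: inf_commute)
  qed
  moreover have "inf p u \<in> Gam u" using p u0 by (simp add: Gam_def)
  ultimately obtain n where n: "q \<le> nmul n (inf p u)"
    using units by (auto simp: strong_unit_def)
  have "inf (inf p u) q \<le> inf p q" by (simp add: inf.coboundedI1 le_infI2)
  then have "inf (inf p u) q = 0" using pq p q u0 by (simp add: antisym)
  then show ?thesis using disjoint_le_nmul_eq_zero[OF _ q _ n] p u0 by simp
qed simp
end

locale archimedean_chain = lattice_ordered_group T for T :: "'g::{group_add,lattice} itself" +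
  assumes linear: "(a::'g) \<le> b \<or> b \<le> a"
    and archimedean: "0 < a \<Longrightarrow> \<exists>n. b \<le> nmul n (a::'g)"
begin

lemma not_less_imp_le: "\<not> a < b \<Longrightarrow> b \<le> (a::'g)"
  using linear[of a b] by (auto simp: less_le)

lemma nmul_floor: "0 \<le> x \<Longrightarrow> 0 < c \<Longrightarrow> \<exists>m. nmul m c \<le> x \<and> x < nmul (Suc m) (c::'g)"
proof -
  assume x: "0 \<le> x" and c: "0 < c"
  obtain k where "x \<le> nmul k c" using archimedean[OF c] by blast
  then have "x < nmul (Suc k) c" using nmul_less_Suc[OF c] by (rule le_less_trans)
  moreover have "\<not> x < nmul 0 c" using x by auto
  ultimately obtain m where "\<forall>i\<le>m. \<not> x < nmul i c" "x < nmul (Suc m) c"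
    using ex_least_nat_less[where P="\<lambda>i. x < nmul i c"] by blast
  then show ?thesis using not_less_imp_le by blast
qed

lemma nonneg_eq_nmul_least_pos:
  assumes a: "0 < a" and least: "\<And>g. 0 < g \<Longrightarrow> a \<le> g" and x: "0 \<le> x"
  shows "\<exists>k. x = nmul k (a::'g)"
proof -
  obtain m where m: "nmul m a \<le> x" "x < nmul (Suc m) a" using nmul_floor[OF x a] by blast
  have "-nmul m a + x < a"
    using lg_add_strict_left_mono[OF m(2)[unfolded nmul_Suc_right], of "-nmul m a"]
    by (simp add: add.assoc[symmetric])
  then have "\<not> 0 < -nmul m a + x" using least less_le_not_le by blast
  moreover have "0 \<le> -nmul m a + x" using lg_add_left_mono[OF m(1), of "-nmul m a"] by simp
  ultimately have "-nmul m a + x = 0" by (simp add: less_le)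
  then have "x = nmul m a" by (metis add_minus_cancel add.right_neutral)
  then show ?thesis by blast
qed

lemma double_le_if_dense:
  assumes dense: "\<And>a::'g. 0 < a \<Longrightarrow> \<exists>g. 0 < g \<and> g < a" and e: "0 < e"
  shows "\<exists>c. 0 < c \<and> c + c \<le> (e::'g)"
proof -
  obtain b where b: "0 < b" "b < e" using dense e by blast
  define c where "c = e + -b"
  have cb: "c + b = e" by (simp add: c_def add.assoc)
  have c: "0 < c" using lg_add_strict_right_mono[OF b(2), of "-b"] by (simp add: c_def)
  consider "c \<le> b" | "b \<le> c" using linear by blast
  then show ?thesis
  proof cases
    case 1 then show ?thesis using c cb lg_add_left_mono[OF 1, of c] by auto
  next
    case 2 then show ?thesis using b cb lg_add_right_mono[OF 2, of b] by auto
  qed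
qed

text \<open>In the dense case, the positive difference (x + y) - (y + x) exceeds c + c for some
  c > 0, whereas approximating x and y by multiples of c bounds it by c + c.\<close>
lemma commutator_not_pos_if_dense:
  assumes dense: "\<And>a::'g. 0 < a \<Longrightarrow> \<exists>g. 0 < g \<and> g < a" and x: "0 \<le> x" and y: "0 \<le> y"
  shows "\<not> y + x < x + (y::'g)"
proof
  assume lt: "y + x < x + y"
  define e where "e = (x + y) + -(y + x)"
  have e: "0 < e" using lg_add_strict_right_mono[OF lt, of "-(y + x)"] by (simp add: e_def)
  obtain c where c: "0 < c" "c + c \<le> e" using double_le_if_dense[OF dense e] by blast
  obtain m where m: "nmul m c \<le> x" "x < nmul (Suc m) c" using nmul_floor[OF x c(1)] by blast
  obtain n where n: "nmul n c \<le> y" "y < nmul (Suc n) c" using nmul_floor[OF y c(1)] by blast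
  have "x + y < nmul (Suc m) c + nmul (Suc n) c"
    using lg_add_less_le_mono[OF m(2) less_imp_le[OF n(2)]] .
  also have "\<dots> = (c + c) + nmul (m + n) c"
    using nmul_add[of "Suc m" "Suc n" c] nmul_add[of 2 "m + n" c]
    by (simp add: numeral_2_eq_2 add.assoc)
  finally have upper: "x + y < (c + c) + nmul (m + n) c" .
  have "nmul (n + m) c \<le> y + x" using lg_add_mono[OF n(1) m(1)] by (simp add: nmul_add)
  then have lower: "-(y + x) \<le> - nmul (m + n) c" using lg_minus_le_minus by (simp add: add.commute)
  have "e < (c + c) + nmul (m + n) c + - nmul (m + n) c"
    unfolding e_def using lg_add_less_le_mono[OF upper lower] .
  also have "\<dots> = c + c" by (simp only: add.assoc right_minus add_0_right)
  finally show False using c(2) by simp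
qed

lemma lg_add_commute_nonneg:
  assumes x: "0 \<le> x" and y: "0 \<le> y"
  shows "x + y = y + (x::'g)"
proof (cases "\<exists>a::'g. 0 < a \<and> (\<forall>g. 0 < g \<longrightarrow> a \<le> g)")
  case True
  then obtain a :: 'g where a: "0 < a" and least: "\<And>g. 0 < g \<Longrightarrow> a \<le> g" by blast
  obtain i j where "x = nmul i a" "y = nmul j a"
    using nonneg_eq_nmul_least_pos[OF a least x] nonneg_eq_nmul_least_pos[OF a least y] by blast
  then show ?thesis by (simp add: nmul_commute)
next
  case False
  then have dense: "\<And>a::'g. 0 < a \<Longrightarrow> \<exists>g. 0 < g \<and> g < a"
    using not_less_imp_le by blast
  then show ?thesis
    using commutator_not_pos_if_dense[OF dense x y] commutator_not_pos_if_dense[OF dense y x]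
      linear[of "x + y" "y + x"] by (auto simp: less_le)
qed

lemma lg_add_commute: "x + y = y + (x::'g)"
proof -
  have commute_if_neg_commute: "x + y = y + x" if "-x + y = y + -x" for x y :: 'g
  proof -
    have "x + (-x + y) + x = x + (y + -x) + x" by (simp only: that)
    then show ?thesis by (simp add: add.assoc)
  qed
  have nonneg_neg: "0 \<le> -z" if "z \<le> 0" for z :: 'g
    using lg_minus_le_minus[OF that] by simp
  consider "0 \<le> x" "0 \<le> y" | "x \<le> 0" "0 \<le> y" | "0 \<le> x" "y \<le> 0" | "x \<le> 0" "y \<le> 0"
    using linear by blast
  then show ?thesis
  proof cases
    case 1 then show ?thesis by (rule lg_add_commute_nonneg)
  next
    case 2 then show ?thesis
      using commute_if_neg_commute[of x y] lg_add_commute_nonneg[of "-x" y] nonneg_neg by blast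
  next
    case 3 then show ?thesis
      using commute_if_neg_commute[of y x] lg_add_commute_nonneg[of x "-y"] nonneg_neg by simp
  next
    case 4
    then have "-x + -y = -y + -x" using lg_add_commute_nonneg nonneg_neg by blast
    then have "-(y + x) = -(x + y)" by (simp only: minus_add)
    then show ?thesis by simp
  qed
qed

end

locale unital_archimedean_chain = archimedean_chain T for T :: "'g::{group_add,lattice} itself" +
  fixes u :: 'g
  assumes unit_pos: "0 < u"
begin

lemma lg_add_left_commute: "a + (b + c) = b + (a + (c::'g))"
  by (simp only: add.assoc[symmetric] lg_add_commute[of a b])

lemma mem_Gam_iff: "x \<in> Gam u \<longleftrightarrow> 0 \<le> x \<and> x \<le> u"
  by (simp add: Gam_def)

lemma zero_mem_Gam: "0 \<in> Gam u"
  using unit_pos by (simp add: mem_Gam_iff)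

lemma unit_mem_Gam: "u \<in> Gam u"
  using unit_pos by (simp add: mem_Gam_iff)

lemma add_mem_Gam: "x \<in> Gam u \<Longrightarrow> y \<in> Gam u \<Longrightarrow> x + y \<le> u \<Longrightarrow> x + y \<in> Gam u"
  using lg_add_mono[of 0 x 0 y] by (simp add: mem_Gam_iff)

lemma diff_mem_Gam:
  assumes x: "x \<in> Gam u" and y: "y \<in> Gam u" and xy: "x \<le> y"
  shows "y - x \<in> Gam u"
proof -
  have "0 \<le> y - x" using lg_add_right_mono[OF xy, of "-x"] by simp
  moreover have "-x \<le> 0" using lg_minus_le_minus[of 0 x] x by (simp add: mem_Gam_iff)
  then have "y - x \<le> y" using lg_add_left_mono[of "-x" 0 y] by simp
  ultimately show ?thesis using y by (auto simp: mem_Gam_iff)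
qed

lemma complement_mem_Gam: "x \<in> Gam u \<Longrightarrow> u - x \<in> Gam u"
  using diff_mem_Gam[OF _ unit_mem_Gam] by (simp add: mem_Gam_iff)

lemma gam_odot_eq_0_iff: "gam_odot u x y = 0 \<longleftrightarrow> x + y \<le> u"
proof -
  have "x - u + y = x + y + -u" by (simp only: diff_conv_add_uminus add.assoc lg_add_commute[of "-u" y])
  then have "x - u + y \<le> 0 \<longleftrightarrow> x + y \<le> u"
    using lg_add_le_cancel_right[of "x + y" "-u" u] by simp
  then show ?thesis by (simp add: gam_odot_def sup.absorb_iff2[symmetric])
qed

lemma gam_oplus_eq_add: "x + y \<le> u \<Longrightarrow> gam_oplus u x y = x + y"
  by (simp add: gam_oplus_def inf_absorb1)

lemma gam_oplus_eq_unit: "u \<le> x + y \<Longrightarrow> gam_oplus u x y = u"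
  by (simp add: gam_oplus_def inf_absorb2)

lemma gam_is_MV: "gam_is_MV u"
  by (simp add: gam_is_MV_def gam_oplus_def lg_add_commute)

lemma inf_nmul_Suc_unit:
  "x \<in> Gam u \<Longrightarrow> inf (nmul (Suc k) x) u = gam_oplus u x (inf (nmul k x) u)"
  using lg_add_right_mono[of 0 x u]
  by (simp add: mem_Gam_iff gam_oplus_def inf_add_distrib_left inf_assoc inf_absorb2)

lemma unit_in_oplus_closure:
  assumes x: "x \<in> Gam u" "x \<noteq> 0"
    and zero: "P 0" and step: "\<And>y. y \<in> Gam u \<Longrightarrow> P y \<Longrightarrow> P (gam_oplus u x y)"
  shows "P u"
proof -
  have iterates: "P (inf (nmul k x) u)" for k
  proof (induct k)
    case 0 show ?case using zero unit_pos by (simp add: inf_absorb1)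
  next
    case (Suc k)
    have "inf (nmul k x) u \<in> Gam u"
      using nmul_nonneg[of x k] x(1) unit_pos by (simp add: mem_Gam_iff)
    then show ?case unfolding inf_nmul_Suc_unit[OF x(1)] using step Suc by blast
  qed
  obtain n where "u \<le> nmul n x" using archimedean x by (auto simp: mem_Gam_iff less_le)
  then show ?thesis using iterates[of n] by (simp add: inf_absorb2)
qed

lemma zero_maximal_ideal: "gam_maximal_ideal u {0}"
  unfolding gam_maximal_ideal_def
proof (intro conjI allI impI)
  show "gam_ideal u {0}"
    using zero_mem_Gam unit_pos by (auto simp: gam_ideal_def mem_Gam_iff gam_oplus_def inf_absorb1)
  show "{0} \<noteq> Gam u" using unit_mem_Gam unit_pos by (metis less_irrefl singletonD)
next
  fix J assume J: "gam_ideal u J \<and> J \<noteq> Gam u \<and> {0} \<subseteq> J"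
  have "x = 0" if "x \<in> J" for x
  proof (rule ccontr)
    assume "x \<noteq> 0"
    moreover have "x \<in> Gam u" using J \<open>x \<in> J\<close> by (auto simp: gam_ideal_def)
    moreover have "0 \<in> J" and "\<And>y. y \<in> J \<Longrightarrow> gam_oplus u x y \<in> J"
      using J \<open>x \<in> J\<close> unfolding gam_ideal_def by blast+
    ultimately have "u \<in> J" using unit_in_oplus_closure[of x "\<lambda>y. y \<in> J"] by blast
    then have "Gam u \<subseteq> J" using J by (auto simp: gam_ideal_def mem_Gam_iff)
    then show False using J by (auto simp: gam_ideal_def)
  qed
  then show "J = {0}" using J by auto
qed

lemma state_range: "R_state u e s \<Longrightarrow> x \<in> Gam u \<Longrightarrow> 0 \<le> s x \<and> s x \<le> e"
  by (simp add: R_state_def Gam_def)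

lemma state_unit: "R_state u e s \<Longrightarrow> s u = e"
  by (simp add: R_state_def)

lemma state_add:
  "R_state u e s \<Longrightarrow> x \<in> Gam u \<Longrightarrow> y \<in> Gam u \<Longrightarrow> x + y \<le> u \<Longrightarrow> s (x + y) = s x + s y"
  unfolding R_state_def using gam_odot_eq_0_iff gam_oplus_eq_add by metis

lemma state_zero: "R_state u e s \<Longrightarrow> s 0 = 0"
  using state_add[of e s 0 0] zero_mem_Gam unit_pos by simp

lemma state_diff:
  assumes s: "R_state u e s" and x: "x \<in> Gam u" and y: "y \<in> Gam u" and xy: "x \<le> y"
  shows "s (y - x) = s y - s x"
proof -
  have "x + (y - x) = y" by (simp add: lg_add_commute[of x])
  then show ?thesis
    using state_add[OF s x diff_mem_Gam[OF x y xy]] y by (simp add: mem_Gam_iff algebra_simps)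
qed

lemma state_mono: "R_state u e s \<Longrightarrow> x \<in> Gam u \<Longrightarrow> y \<in> Gam u \<Longrightarrow> x \<le> y \<Longrightarrow> s x \<le> s y"
  using state_diff state_range diff_mem_Gam by (metis diff_ge_0_iff_ge)

lemma state_complement: "R_state u e s \<Longrightarrow> x \<in> Gam u \<Longrightarrow> s (u - x) = e - s x"
  using state_diff[OF _ _ unit_mem_Gam] state_unit by (metis mem_Gam_iff)

lemma state_oplus:
  assumes s: "R_state u e s" and x: "x \<in> Gam u" and y: "y \<in> Gam u"
  shows "s (gam_oplus u x y) = gam_oplus e (s x) (s y)"
proof (cases "x + y \<le> u")
  case True
  then have "s (gam_oplus u x y) = s x + s y" using state_add[OF s x y] gam_oplus_eq_add by simp
  moreover have "s x + s y \<le> e" using state_add[OF s x y True] state_range[OF s add_mem_Gam[OF x y True]] by simp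
  ultimately show ?thesis by (simp add: gam_oplus_def inf_absorb1)
next
  case False
  then have over: "u \<le> x + y" using linear by blast
  have "u - x \<le> y"
    using lg_add_right_mono[OF over, of "-x"] by (simp add: lg_add_commute[of x] add.assoc)
  then have "s (u - x) \<le> s y"
    using state_mono[OF s complement_mem_Gam[OF x] y] by simp
  then have "e - s x \<le> s y" using state_complement[OF s x] by simp
  then show ?thesis
    using gam_oplus_eq_unit[OF over] state_unit[OF s] by (simp add: gam_oplus_def inf_absorb2 algebra_simps)
qed

lemma state_is_morphism:
  assumes s: "R_state u e s"
  shows "R_state_morphism u e s"
proof -
  have "gam_negr u x = gam_negl u x" for x
    by (simp add: gam_negr_def gam_negl_def lg_add_commute[of "-x"])
  moreover have "gam_negr e a = gam_negl e a" for a
    by (simp add: gam_negr_def gam_negl_def)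
  ultimately show ?thesis
    using s state_zero[OF s] state_oplus[OF s] state_complement[OF s]
    by (simp add: R_state_morphism_def R_state_def gam_negl_def)
qed

lemma state_ker_eq_zero:
  assumes e: "e \<noteq> 0" and s: "R_state u e s"
  shows "state_ker u s = {0}"
proof -
  have "x = 0" if x: "x \<in> Gam u" and sx: "s x = 0" for x
  proof (rule ccontr)
    assume "x \<noteq> 0"
    moreover have "s (gam_oplus u x y) = 0" if "y \<in> Gam u" "s y = 0" for y
      using state_oplus[OF s x that(1)] sx that(2) state_range[OF s x]
      by (simp add: gam_oplus_def inf_absorb1)
    ultimately have "s u = 0" using unit_in_oplus_closure[of x "\<lambda>y. s y = 0"] x state_zero[OF s] by blast
    then show False using state_unit[OF s] e by simp
  qed
  then show ?thesis using zero_mem_Gam state_zero[OF s] by (auto simp: state_ker_def)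
qed

lemma state_nmul_decomp:
  assumes s: "R_state u e s" and x: "x \<in> Gam u"
  shows "\<exists>q r. nmul n x = nmul q u + r \<and> r \<in> Gam u \<and> r < u \<and> real n *\<^sub>R s x = real q *\<^sub>R e + s r"
proof (induct n)
  case 0
  show ?case using zero_mem_Gam unit_pos state_zero[OF s] by (intro exI[of _ 0]) simp
next
  case (Suc n)
  then obtain q r where qr: "nmul n x = nmul q u + r" "r \<in> Gam u" "r < u"
      "real n *\<^sub>R s x = real q *\<^sub>R e + s r"
    by blast
  have Suc_n: "nmul (Suc n) x = nmul q u + (x + r)" using qr(1) by (simp add: lg_add_left_commute)
  show ?case
  proof (cases "x + r < u")
    case True
    then have "x + r \<in> Gam u" and "s (x + r) = s x + s r"
      using add_mem_Gam[OF x qr(2)] state_add[OF s x qr(2)] by (simp_all add: less_le)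
    then show ?thesis using Suc_n True qr(4) by (intro exI[of _ q] exI[of _ "x + r"]) (simp add: algebra_simps)
  next
    case False
    define r' where "r' = x + r - u"
    have "nmul (Suc q) u + r' = nmul q u + (u + (x + r - u))"
      unfolding nmul_Suc_right r'_def by (simp only: add.assoc)
    also have "u + (x + r - u) = x + r" by (simp add: lg_add_commute[of u])
    finally have Suc_n': "nmul (Suc n) x = nmul (Suc q) u + r'" using Suc_n by simp
    have "0 \<le> r'" using lg_add_right_mono[OF not_less_imp_le[OF False], of "-u"] by (simp add: r'_def)
    moreover have "x + r < u + u" using lg_add_le_less_mono[of x u r u] x qr(3) by (simp add: mem_Gam_iff)
    then have "r' < u" using lg_add_strict_right_mono[of "x + r" "u + u" "-u"] by (simp add: r'_def add.assoc)
    ultimately have r': "r' \<in> Gam u" "r' < u" by (simp_all add: mem_Gam_iff less_le)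
    have "u - x + r' = r' + (u - x)" by (rule lg_add_commute)
    also have "\<dots> = x + (r + -x)" by (simp only: r'_def diff_conv_add_uminus add.assoc minus_add_cancel)
    also have "\<dots> = r" by (simp add: lg_add_commute[of x])
    finally have "s r = e - s x + s r'"
      using state_add[OF s complement_mem_Gam[OF x] r'(1)] state_complement[OF s x] qr(2)
      by (simp add: mem_Gam_iff)
    then show ?thesis using Suc_n' r' qr(4) by (intro exI[of _ "Suc q"] exI[of _ r']) (simp add: algebra_simps)
  qed
qed

lemma state_nmul_bounds:
  assumes s: "R_state u e s" and x: "x \<in> Gam u"
    and lower: "nmul q u \<le> nmul n x" and upper: "nmul n x < nmul (Suc q) u"
  shows "real q *\<^sub>R e \<le> real n *\<^sub>R s x \<and> real n *\<^sub>R s x \<le> real (Suc q) *\<^sub>R e"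
proof -
  obtain q' r where qr: "nmul n x = nmul q' u + r" "r \<in> Gam u" "r < u"
      "real n *\<^sub>R s x = real q' *\<^sub>R e + s r"
    using state_nmul_decomp[OF s x] by blast
  have "nmul q' u \<le> nmul n x" using qr(1,2) lg_add_left_mono[of 0 r "nmul q' u"] by (simp add: mem_Gam_iff)
  moreover have "nmul n x < nmul (Suc q') u"
    unfolding nmul_Suc_right qr(1) by (rule lg_add_strict_left_mono[OF qr(3)])
  ultimately have "q' = q"
    using lower upper nmul_less_nmul_imp_less[OF unit_pos] by (meson le_less_trans less_Suc_eq_le antisym)
  then show ?thesis using qr(4) state_range[OF s qr(2)] by (simp add: algebra_simps)
qed

lemma state_le_if_archimedean:
  assumes arch: "riesz_archimedean TYPE('r::{ordered_real_vector,lattice})"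
    and s1: "R_state u (e::'r) s1" and s2: "R_state u e s2" and x: "x \<in> Gam u"
  shows "s1 x \<le> s2 x"
proof -
  have "real n *\<^sub>R (s1 x - s2 x) \<le> e" for n
  proof -
    obtain q where "nmul q u \<le> nmul n x" "nmul n x < nmul (Suc q) u"
      using nmul_floor[OF nmul_nonneg unit_pos] x by (auto simp: mem_Gam_iff)
    then have "real n *\<^sub>R s1 x \<le> real (Suc q) *\<^sub>R e" "real q *\<^sub>R e \<le> real n *\<^sub>R s2 x"
      using state_nmul_bounds[OF s1 x] state_nmul_bounds[OF s2 x] by auto
    then have "real n *\<^sub>R s1 x \<le> e + real n *\<^sub>R s2 x"
      by (simp add: algebra_simps) (meson add_left_mono order_trans)
    then show ?thesis by (simp add: algebra_simps)
  qed
  then have "s1 x - s2 x \<le> 0" using arch unfolding riesz_archimedean_def by blast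
  then show ?thesis by simp
qed

lemma nmul_add_distrib: "nmul n (x + y) = nmul n x + nmul n (y::'g)"
  by (induct n) (simp_all add: add.assoc lg_add_left_commute)

text \<open>Hoelder's embedding of G into the reals, normalised to send u to 1.\<close>
definition unit_ratio :: "'g \<Rightarrow> real" where
  "unit_ratio x = Sup {real q / real n | q n. 0 < n \<and> nmul q u \<le> nmul n x}"

lemma nmul_ratio_le:
  assumes n: "0 < n" "0 < n'" and lower: "nmul q u \<le> nmul n z" and upper: "nmul n' z \<le> nmul m u"
  shows "real q / real n \<le> real m / real n'"
proof -
  have "nmul (n' * q) u \<le> nmul (n' * n) z" unfolding nmul_mult using nmul_mono[OF lower] .
  also have "\<dots> = nmul n (nmul n' z)" by (simp add: nmul_mult[symmetric] mult.commute)
  also have "\<dots> \<le> nmul (n * m) u" unfolding nmul_mult using nmul_mono[OF upper] .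
  finally have "n' * q \<le> n * m" using nmul_le_nmul_iff[OF unit_pos] by blast
  then have "real n' * real q \<le> real n * real m" by (metis of_nat_le_iff of_nat_mult)
  then show ?thesis using n by (simp add: divide_simps mult.commute)
qed

lemma unit_ratio_ge:
  assumes n: "0 < n" and lower: "nmul q u \<le> nmul n z"
  shows "real q \<le> real n * unit_ratio z"
proof -
  obtain m where "z \<le> nmul m u" using archimedean[OF unit_pos] by blast
  then have bdd: "bdd_above {real q / real n | q n. 0 < n \<and> nmul q u \<le> nmul n z}"
    unfolding bdd_above_def using nmul_ratio_le[of _ 1 _ z m] by auto
  have "real q / real n \<le> unit_ratio z"
    unfolding unit_ratio_def by (rule cSup_upper[OF _ bdd]) (use n lower in blast)
  then show ?thesis using n by (simp add: divide_simps mult.commute)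
qed

lemma unit_ratio_le:
  assumes z: "0 \<le> z" and n: "0 < n" and upper: "nmul n z \<le> nmul m u"
  shows "real n * unit_ratio z \<le> real m"
proof -
  have "unit_ratio z \<le> real m / real n"
    unfolding unit_ratio_def
  proof (rule cSup_least)
    have "nmul 0 u \<le> nmul 1 z" using z by simp
    then show "{real q / real n | q n. 0 < n \<and> nmul q u \<le> nmul n z} \<noteq> {}" by blast
  qed (use nmul_ratio_le n upper in blast)
  then show ?thesis using n by (simp add: divide_simps mult.commute)
qed

lemma unit_ratio_add:
  assumes x: "0 \<le> x" and y: "0 \<le> y"
  shows "unit_ratio (x + y) = unit_ratio x + unit_ratio y"
proof -
  have xy: "0 \<le> x + y" using lg_add_mono[OF x y] by simp
  have "real n * \<bar>unit_ratio (x + y) - (unit_ratio x + unit_ratio y)\<bar> \<le> 2" if n: "0 < n" for n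
  proof -
    obtain q1 where q1: "nmul q1 u \<le> nmul n x" "nmul n x \<le> nmul (Suc q1) u"
      using nmul_floor[OF nmul_nonneg[OF x] unit_pos] less_imp_le by blast
    obtain q2 where q2: "nmul q2 u \<le> nmul n y" "nmul n y \<le> nmul (Suc q2) u"
      using nmul_floor[OF nmul_nonneg[OF y] unit_pos] less_imp_le by blast
    have "nmul (q1 + q2) u \<le> nmul n (x + y)"
      unfolding nmul_add nmul_add_distrib by (rule lg_add_mono[OF q1(1) q2(1)])
    then have "real (q1 + q2) \<le> real n * unit_ratio (x + y)" by (rule unit_ratio_ge[OF n])
    moreover have "nmul n (x + y) \<le> nmul (Suc q1 + Suc q2) u"
      unfolding nmul_add nmul_add_distrib by (rule lg_add_mono[OF q1(2) q2(2)])
    then have "real n * unit_ratio (x + y) \<le> real (Suc q1 + Suc q2)" by (rule unit_ratio_le[OF xy n])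
    moreover have "real q1 \<le> real n * unit_ratio x" "real n * unit_ratio x \<le> real (Suc q1)"
      using unit_ratio_ge[OF n q1(1)] unit_ratio_le[OF x n q1(2)] by auto
    moreover have "real q2 \<le> real n * unit_ratio y" "real n * unit_ratio y \<le> real (Suc q2)"
      using unit_ratio_ge[OF n q2(1)] unit_ratio_le[OF y n q2(2)] by auto
    moreover have "real n * \<bar>unit_ratio (x + y) - (unit_ratio x + unit_ratio y)\<bar>
        = \<bar>real n * unit_ratio (x + y) - (real n * unit_ratio x + real n * unit_ratio y)\<bar>"
      by (simp only: distrib_left[symmetric] right_diff_distrib[symmetric] abs_mult abs_of_nat)
    ultimately show ?thesis by linarith
  qed
  then have "unit_ratio (x + y) - (unit_ratio x + unit_ratio y) = 0"
    by (rule real_eq_0_if_nat_mult_abs_bounded)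
  then show ?thesis by simp
qed

lemma unit_ratio_unit_interval: "x \<in> Gam u \<Longrightarrow> 0 \<le> unit_ratio x \<and> unit_ratio x \<le> 1"
  using unit_ratio_ge[of 1 0 x] unit_ratio_le[of x 1 1] by (simp add: mem_Gam_iff)

lemma unit_ratio_unit: "unit_ratio u = 1"
  using unit_ratio_ge[of 1 1 u] unit_ratio_le[of u 1 1] unit_pos by simp

lemma unit_ratio_state:
  assumes e: "0 \<le> e"
  shows "R_state u e (\<lambda>x. unit_ratio x *\<^sub>R e)"
proof -
  have "unit_ratio x *\<^sub>R e \<in> Gam e" if "x \<in> Gam u" for x
    using unit_ratio_unit_interval[OF that] scaleR_right_mono[of _ 1 e] e
    by (simp add: Gam_def scaleR_nonneg_nonneg)
  moreover have "unit_ratio (gam_oplus u x y) *\<^sub>R e = unit_ratio x *\<^sub>R e + unit_ratio y *\<^sub>R e"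
    if "x \<in> Gam u" "y \<in> Gam u" "gam_odot u x y = 0" for x y
    using that by (simp add: gam_odot_eq_0_iff gam_oplus_eq_add mem_Gam_iff unit_ratio_add scaleR_add_left)
  ultimately show ?thesis by (simp add: R_state_def unit_ratio_unit)
qed

end

lemma unital_archimedean_chain_if_Gam_strong_units:
  fixes u :: "'g::{group_add,lattice}"
  assumes "unital_lgroup u" and units: "\<forall>x\<in>Gam u. x \<noteq> 0 \<longrightarrow> strong_unit x"
  shows "unital_archimedean_chain TYPE('g) u"
proof -
  have lg: "lgroup TYPE('g)" and u: "strong_unit u" using assms(1) by (simp_all add: unital_lgroup_def)
  interpret lattice_ordered_group "TYPE('g)" using lg by unfold_locales
  have linear: "a \<le> b \<or> b \<le> a" for a b :: 'g
    using chain_if_disjoint_trivial disjoint_trivial_if_Gam_strong_units[OF u units] by blast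
  have archimedean: "\<exists>n. b \<le> nmul n a" if a: "0 < a" for a b :: 'g
  proof (cases "a \<le> u")
    case True then show ?thesis using units a by (auto simp: Gam_def strong_unit_def)
  next
    case False
    then have "u \<le> a" using linear by blast
    moreover obtain n where "b \<le> nmul n u" using u by (auto simp: strong_unit_def)
    ultimately show ?thesis by (meson nmul_mono order_trans)
  qed
  show ?thesis using lg u linear archimedean by unfold_locales (auto simp: strong_unit_def)
qed

theorem proposition3p14:
  fixes u :: "'g::{group_add,lattice}"
    and e :: "'r::{ordered_real_vector,lattice}"
  assumes "unital_lgroup u"
    and "\<forall>x\<in>Gam u. x \<noteq> 0 \<longrightarrow> strong_unit x"
  shows "gam_is_MV u \<and>
    (riesz_unit e \<longrightarrow>
       (\<exists>s. R_state u e s) \<and>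
       (\<forall>s. R_state u e s \<longrightarrow>
            R_state_morphism u e s \<and> gam_maximal_ideal u (state_ker u s)) \<and>
       (riesz_archimedean TYPE('r) \<longrightarrow>
            (\<exists>s. R_state u e s \<and>
                 (\<forall>s'. R_state u e s' \<longrightarrow> (\<forall>x\<in>Gam u. s' x = s x)))))"
proof -
  interpret unital_archimedean_chain "TYPE('g)" u
    using assms by (rule unital_archimedean_chain_if_Gam_strong_units)
  have "(\<exists>s. R_state u e s) \<and>
       (\<forall>s. R_state u e s \<longrightarrow>
            R_state_morphism u e s \<and> gam_maximal_ideal u (state_ker u s)) \<and>
       (riesz_archimedean TYPE('r) \<longrightarrow>
            (\<exists>s. R_state u e s \<and>
                 (\<forall>s'. R_state u e s' \<longrightarrow> (\<forall>x\<in>Gam u. s' x = s x))))"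
    if "riesz_unit e"
  proof -
    have e: "0 < e" using that by (simp add: riesz_unit_def)
    have ratio: "R_state u e (\<lambda>x. unit_ratio x *\<^sub>R e)"
      using e by (simp add: unit_ratio_state)
    have "R_state_morphism u e s \<and> gam_maximal_ideal u (state_ker u s)" if "R_state u e s" for s
      using state_is_morphism[OF that] state_ker_eq_zero[OF _ that] zero_maximal_ideal e by auto
    moreover have "s' x = unit_ratio x *\<^sub>R e"
      if "riesz_archimedean TYPE('r)" "R_state u e s'" "x \<in> Gam u" for s' x
      using state_le_if_archimedean[OF that(1,2) ratio that(3)]
        state_le_if_archimedean[OF that(1) ratio that(2,3)] by (rule antisym)
    ultimately show ?thesis using ratio by blast
  qed
  then show ?thesis using gam_is_MV by blast
qed

end
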